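(* Let $G=(\mu,\mathcal{V},\mathcal{W},\mathcal{E})$ be a weighted bipartite graph with edge density $\delta>0$. If $G$ is $\theta$-maximal for some $\theta>1$, then $G$ is $(\frac{\theta-1}{\theta}\cdot\delta)$-connected.
   Context: A weighted bipartite graph is $G=(\mu,\mathcal{V},\mathcal{W},\mathcal{E})$ with $\mu:\mathbb{R}_{>0}\to\mathbb{R}_{>0}$, $\mathcal{V},\mathcal{W}$ finite sets of positive reals, $\mathcal{E}\subseteq\mathcal{V}\times\mathcal{W}$. $\mu(\mathcal{T})=\sum_{t\in\mathcal{T}}\mu(t)$ and $\mu(\mathcal{E})=\sum_{(v,w)\in\mathcal{E}}\mu(v)\mu(w)$. Edge density $\delta(G)=\mu(\mathcal{E})/(\mu(\mathcal{V})\mu(\mathcal{W}))$ if $\mathcal{E}\ne\emptyset$, else $0$. For $\theta\ge1$, $\mu^{(\theta)}(G)=\delta(G)^\theta\mu(\mathcal{V})\mu(\mathcal{W})$. A subgraph of $G$ is $(\mu,\mathcal{V}',\mathcal{W}',\mathcal{E}')$ with $\mathcal{V}'\subseteq\mathcal{V}$, $\mathcal{W}'\subseteq\mathcal{W}$, $\mathcal{E}'\subseteq\mathcal{E}\cap(\mathcal{V}'\times\mathcal{W}')$. $G$ is $\theta$-maximal if $\mu^{(\theta)}(G)\ge\mu^{(\theta)}(G')$ for every subgraph $G'$. Neighbourhoods: $\Gamma_G(v)=\{w\in\mathcal{W}:(v,w)\in\mathcal{E}\}$ for $v\in\mathcal{V}$ and $\Gamma_G(w)=\{v\in\mathcal{V}:(v,w)\in\mathcal{E}\}$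 for $w\in\mathcal{W}$. $G$ is $\eta$-connected if $\mu(\Gamma_G(v))\ge\eta\,\mu(\mathcal{W})$ for all $v\in\mathcal{V}$ and $\mu(\Gamma_G(w))\ge\eta\,\mu(\mathcal{V})$ for all $w\in\mathcal{W}$. *)

theory Defs
  imports Complex_Main
begin

type_synonym wbgraph = "(real \<Rightarrow> real) \<times> real set \<times> real set \<times> (real \<times> real) set"

definition wbg :: "wbgraph \<Rightarrow> bool" where
  "wbg G = (case G of (\<mu>, V, W, E) \<Rightarrow>
      (\<forall>x>0. \<mu> x > 0) \<and> finite V \<and> finite W \<and>
      (\<forall>v\<in>V. v > 0) \<and> (\<forall>w\<in>W. w > 0) \<and> E \<subseteq> V \<times> W)"

definition mu_set :: "(real \<Rightarrow> real) \<Rightarrow> real set \<Rightarrow> real" where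
  "mu_set \<mu> T = (\<Sum>t\<in>T. \<mu> t)"

definition mu_edges :: "(real \<Rightarrow> real) \<Rightarrow> (real \<times> real) set \<Rightarrow> real" where
  "mu_edges \<mu> E = (\<Sum>(v,w)\<in>E. \<mu> v * \<mu> w)"

definition density :: "wbgraph \<Rightarrow> real" where
  "density G = (case G of (\<mu>, V, W, E) \<Rightarrow>
      (if E = {} then 0 else mu_edges \<mu> E / (mu_set \<mu> V * mu_set \<mu> W)))"

definition mu_theta :: "real \<Rightarrow> wbgraph \<Rightarrow> real" where
  "mu_theta \<theta> G = (case G of (\<mu>, V, W, E) \<Rightarrow>
      density G powr \<theta> * mu_set \<mu> V * mu_set \<mu> W)"

definition subgraph :: "wbgraph \<Rightarrow> wbgraph \<Rightarrow> bool" where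
  "subgraph G' G = (case G of (\<mu>, V, W, E) \<Rightarrow> case G' of (\<mu>', V', W', E') \<Rightarrow>
      \<mu>' = \<mu> \<and> V' \<subseteq> V \<and> W' \<subseteq> W \<and> E' \<subseteq> E \<inter> (V' \<times> W'))"

definition theta_maximal :: "real \<Rightarrow> wbgraph \<Rightarrow> bool" where
  "theta_maximal \<theta> G = (\<forall>G'. subgraph G' G \<longrightarrow> mu_theta \<theta> G' \<le> mu_theta \<theta> G)"

definition eta_connected :: "real \<Rightarrow> wbgraph \<Rightarrow> bool" where
  "eta_connected \<eta> G = (case G of (\<mu>, V, W, E) \<Rightarrow>
      (\<forall>v\<in>V. mu_set \<mu> {w\<in>W. (v,w) \<in> E} \<ge> \<eta> * mu_set \<mu> W) \<and>
      (\<forall>w\<in>W. mu_set \<mu> {v\<in>V. (v,w) \<in> E} \<ge> \<eta> * mu_set \<mu> V))"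

end

theory Submission
  imports Defs "HOL-Analysis.Convex"
begin

text \<open>
  Compare G with the subgraph obtained by deleting one vertex v, of weight a and
  neighbourhood weight d. Writing M for the edge mass and A, B for the masses of the two
  sides, \<delta>^\<theta> A B = M^\<theta> (A B)^(1-\<theta>), so \<theta>-maximality gives
  ((M - a d)/M)^\<theta> \<le> ((A - a)/A)^(\<theta>-1). Taking \<theta>-th roots and bounding the concave
  function y \<mapsto> y^((\<theta>-1)/\<theta>) by its tangent at y = 1 yields
  d \<ge> (\<theta>-1)/\<theta> \<cdot> M/A = (\<theta>-1)/\<theta> \<cdot> \<delta> B.
  Vertices on the other side are handled by transposing the graph.
\<close>

lemma powr_le_tangent_at_one:
  fixes c y :: real
  assumes "0 \<le> c" "c \<le> 1" "0 < y"
  shows "y powr c \<le> 1 - c * (1 - y)"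
  using Youngs_inequality_0[of "1 - c" c 1 y] assms by (simp add: algebra_simps)

lemma le_tangent_if_powr_le_powr:
  fixes \<theta> x y :: real
  assumes "\<theta> > 1" "0 < x" "0 < y" "x powr \<theta> \<le> y powr (\<theta> - 1)"
  shows "x \<le> 1 - (\<theta> - 1) / \<theta> * (1 - y)"
proof -
  have "x = (x powr \<theta>) powr (1 / \<theta>)"
    using assms(1,2) by (simp add: powr_powr)
  also have "\<dots> \<le> (y powr (\<theta> - 1)) powr (1 / \<theta>)"
    using assms by (intro powr_mono2) auto
  also have "\<dots> = y powr ((\<theta> - 1) / \<theta>)"
    by (simp add: powr_powr)
  also have "\<dots> \<le> 1 - (\<theta> - 1) / \<theta> * (1 - y)"
    using assms by (intro powr_le_tangent_at_one) auto
  finally show ?thesis .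
qed

lemma degree_ge_if_deletion_not_better:
  fixes \<theta> a A B M d :: real
  assumes "\<theta> > 1" "0 < a" "a < A" "0 < B" "0 \<le> d" "0 < M - a * d"
    and not_better: "(M - a * d) powr \<theta> * ((A - a) * B) powr (1 - \<theta>)
      \<le> M powr \<theta> * (A * B) powr (1 - \<theta>)"
  shows "(\<theta> - 1) / \<theta> * (M / A) \<le> d"
proof -
  have "0 \<le> a * d"
    using assms by simp
  then have M: "0 < M"
    using assms(6) by linarith
  have "(M - a * d) powr \<theta> * (A - a) powr (1 - \<theta>) \<le> M powr \<theta> * A powr (1 - \<theta>)"
    using not_better assms by (simp add: powr_mult mult.assoc mult.left_commute[of _ "B powr _"])
  then have "((M - a * d) / M) powr \<theta> \<le> ((A - a) / A) powr (\<theta> - 1)"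
    using assms M by (simp add: powr_divide powr_diff field_simps)
  then have "(M - a * d) / M \<le> 1 - (\<theta> - 1) / \<theta> * (1 - (A - a) / A)"
    using assms M by (intro le_tangent_if_powr_le_powr) auto
  then have "a * ((\<theta> - 1) * M) \<le> a * (\<theta> * A * d)"
    using assms M by (simp add: field_simps)
  then have "(\<theta> - 1) * M \<le> \<theta> * A * d"
    using assms(2) by simp
  then show ?thesis
    using assms by (simp add: field_simps)
qed

lemma wbg_weight_pos:
  assumes "wbg (\<mu>, V, W, E)" "x \<in> V \<union> W"
  shows "0 < \<mu> x"
  using assms by (auto simp: wbg_def)

lemma mu_set_nonneg: "(\<And>x. x \<in> T \<Longrightarrow> 0 \<le> \<mu> x) \<Longrightarrow> 0 \<le> mu_set \<mu> T"
  by (simp add: mu_set_def sum_nonneg)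

lemma mu_set_pos:
  "finite T \<Longrightarrow> T \<noteq> {} \<Longrightarrow> (\<And>x. x \<in> T \<Longrightarrow> 0 < \<mu> x) \<Longrightarrow> 0 < mu_set \<mu> T"
  by (simp add: mu_set_def sum_pos)

lemma mu_set_Diff_singleton:
  "finite T \<Longrightarrow> x \<in> T \<Longrightarrow> mu_set \<mu> (T - {x}) = mu_set \<mu> T - \<mu> x"
  by (simp add: mu_set_def sum_diff1)

lemma mu_edges_empty [simp]: "mu_edges \<mu> {} = 0"
  by (simp add: mu_edges_def)

lemma mu_edges_nonneg:
  "(\<And>v w. (v, w) \<in> E \<Longrightarrow> 0 \<le> \<mu> v * \<mu> w) \<Longrightarrow> 0 \<le> mu_edges \<mu> E"
  unfolding mu_edges_def by (rule sum_nonneg) auto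

lemma mu_edges_star:
  "finite \<Gamma> \<Longrightarrow> mu_edges \<mu> ({v} \<times> \<Gamma>) = \<mu> v * mu_set \<mu> \<Gamma>"
  by (simp add: mu_edges_def mu_set_def sum_distrib_left sum.cartesian_product[symmetric])

lemma mu_edges_Un_disjoint:
  "finite E \<Longrightarrow> finite F \<Longrightarrow> E \<inter> F = {}
    \<Longrightarrow> mu_edges \<mu> (E \<union> F) = mu_edges \<mu> E + mu_edges \<mu> F"
  by (simp add: mu_edges_def sum.union_disjoint)

lemma mu_edges_delete_vertex:
  assumes "finite E" "E \<subseteq> V \<times> W"
  shows "mu_edges \<mu> E
    = mu_edges \<mu> (E \<inter> ((V - {v}) \<times> W)) + \<mu> v * mu_set \<mu> {w \<in> W. (v, w) \<in> E}"
proof -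
  let ?\<Gamma> = "{w \<in> W. (v, w) \<in> E}"
  have \<Gamma>: "finite ?\<Gamma>"
    by (rule finite_subset[of _ "snd ` E"]) (use assms(1) in force)+
  have "E = E \<inter> ((V - {v}) \<times> W) \<union> {v} \<times> ?\<Gamma>"
    using assms(2) by auto
  then have "mu_edges \<mu> E
      = mu_edges \<mu> (E \<inter> ((V - {v}) \<times> W)) + mu_edges \<mu> ({v} \<times> ?\<Gamma>)"
    using assms(1) \<Gamma> by (subst mu_edges_Un_disjoint[symmetric]) auto
  with \<Gamma> show ?thesis
    by (simp add: mu_edges_star)
qed

lemma density_eq: "density (\<mu>, V, W, E) = mu_edges \<mu> E / (mu_set \<mu> V * mu_set \<mu> W)"
  by (simp add: density_def)

lemma mu_theta_eq_powr:
  assumes "0 < mu_edges \<mu> E" "0 < mu_set \<mu> V * mu_set \<mu> W"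
  shows "mu_theta \<theta> (\<mu>, V, W, E)
    = mu_edges \<mu> E powr \<theta> * (mu_set \<mu> V * mu_set \<mu> W) powr (1 - \<theta>)"
proof -
  define M P where "M = mu_edges \<mu> E" and "P = mu_set \<mu> V * mu_set \<mu> W"
  have "mu_theta \<theta> (\<mu>, V, W, E) = (M / P) powr \<theta> * P"
    by (simp add: mu_theta_def density_eq M_def P_def mult.assoc)
  also have "\<dots> = M powr \<theta> * (P / P powr \<theta>)"
    using assms by (simp add: M_def P_def powr_divide)
  also have "P / P powr \<theta> = P powr (1 - \<theta>)"
    using assms by (simp add: P_def powr_diff)
  finally show ?thesis
    by (simp add: M_def P_def)
qed

lemma theta_maximal_left_degree_ge:
  assumes G: "wbg (\<mu>, V, W, E)" and dense: "density (\<mu>, V, W, E) > 0" and \<theta>: "\<theta> > 1"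
    and max: "theta_maximal \<theta> (\<mu>, V, W, E)" and v: "v \<in> V"
  shows "(\<theta> - 1) / \<theta> * density (\<mu>, V, W, E) * mu_set \<mu> W
    \<le> mu_set \<mu> {w \<in> W. (v, w) \<in> E}"
proof -
  define E' where "E' = E \<inter> ((V - {v}) \<times> W)"
  define A B M a d where "A = mu_set \<mu> V" and "B = mu_set \<mu> W" and "M = mu_edges \<mu> E"
    and "a = \<mu> v" and "d = mu_set \<mu> {w \<in> W. (v, w) \<in> E}"
  have fin: "finite V" "finite W" and EVW: "E \<subseteq> V \<times> W"
    using G by (auto simp: wbg_def)
  have pos: "0 < \<mu> x" if "x \<in> V \<union> W" for x
    using G that by (rule wbg_weight_pos)
  then have nonneg: "0 \<le> \<mu> x" if "x \<in> V \<union> W" for x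
    using that by (simp add: less_imp_le)
  have a: "0 < a" "a \<le> A"
    using pos nonneg v fin(1) unfolding a_def A_def mu_set_def
    by (auto intro!: member_le_sum)
  have d: "0 \<le> d"
    using nonneg by (auto simp: d_def intro!: mu_set_nonneg)
  have B: "0 \<le> B"
    using nonneg by (auto simp: B_def intro!: mu_set_nonneg)
  have E': "0 \<le> mu_edges \<mu> E'"
    using nonneg EVW by (auto simp: E'_def intro!: mu_edges_nonneg)
  have M: "M = mu_edges \<mu> E' + a * d"
    using EVW fin by (simp add: M_def E'_def a_def d_def mu_edges_delete_vertex finite_subset)
  have density: "density (\<mu>, V, W, E) = M / (A * B)"
    by (simp add: density_eq M_def A_def B_def)
  with dense a B have "0 < B" "0 < M"
    by (auto simp: zero_less_divide_iff zero_less_mult_iff mult_less_0_iff)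
  have "(\<theta> - 1) / \<theta> * (M / A) \<le> d"
  proof (cases "mu_edges \<mu> E' = 0")
    case True
    then have "M / A \<le> d"
      using a d mult_right_mono[of a A d] by (simp add: M pos_divide_le_eq mult.commute)
    moreover have "(\<theta> - 1) / \<theta> * (M / A) \<le> M / A"
      using \<theta> \<open>0 < M\<close> a by (intro mult_left_le_one_le) auto
    ultimately show ?thesis
      by linarith
  next
    case False
    then have "E' \<noteq> {}"
      by auto
    then have "0 < A - a"
      using pos fin v
      by (auto simp: E'_def A_def a_def simp flip: mu_set_Diff_singleton intro!: mu_set_pos)
    have "mu_theta \<theta> (\<mu>, V - {v}, W, E')
        = (M - a * d) powr \<theta> * ((A - a) * B) powr (1 - \<theta>)"
      using False E' \<open>0 < A - a\<close> \<open>0 < B\<close> fin v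
      by (simp add: mu_theta_eq_powr mu_set_Diff_singleton M A_def B_def a_def)
    moreover have "mu_theta \<theta> (\<mu>, V, W, E) = M powr \<theta> * (A * B) powr (1 - \<theta>)"
      using \<open>0 < M\<close> a \<open>0 < B\<close> by (simp add: mu_theta_eq_powr M_def A_def B_def)
    moreover have "mu_theta \<theta> (\<mu>, V - {v}, W, E') \<le> mu_theta \<theta> (\<mu>, V, W, E)"
      using max by (auto simp: theta_maximal_def subgraph_def E'_def)
    ultimately have "(M - a * d) powr \<theta> * ((A - a) * B) powr (1 - \<theta>)
        \<le> M powr \<theta> * (A * B) powr (1 - \<theta>)"
      by simp
    then show ?thesis
      using degree_ge_if_deletion_not_better \<theta> a \<open>0 < A - a\<close> \<open>0 < B\<close> d False E' M by simp
  qed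
  then show ?thesis
    using \<open>0 < B\<close> by (simp add: density d_def B_def)
qed

definition transpose_graph :: "wbgraph \<Rightarrow> wbgraph" where
  "transpose_graph G = (case G of (\<mu>, V, W, E) \<Rightarrow> (\<mu>, W, V, prod.swap ` E))"

lemma transpose_graph_simp [simp]: "transpose_graph (\<mu>, V, W, E) = (\<mu>, W, V, prod.swap ` E)"
  by (simp add: transpose_graph_def)

lemma transpose_graph_transpose_graph [simp]: "transpose_graph (transpose_graph G) = G"
  by (cases G) (simp add: image_image)

lemma wbg_transpose_graph: "wbg G \<Longrightarrow> wbg (transpose_graph G)"
  by (cases G) (auto simp: wbg_def)

lemma mu_edges_swap [simp]: "mu_edges \<mu> (prod.swap ` E) = mu_edges \<mu> E"
  by (simp add: mu_edges_def sum.reindex mult.commute case_prod_beta)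

lemma density_transpose_graph [simp]: "density (transpose_graph G) = density G"
  by (cases G) (simp add: density_eq mult.commute)

lemma mu_theta_transpose_graph [simp]: "mu_theta \<theta> (transpose_graph G) = mu_theta \<theta> G"
  by (cases G) (simp add: mu_theta_def density_eq mult.commute mult.left_commute)

lemma subgraph_transpose_graph:
  "subgraph G' G \<Longrightarrow> subgraph (transpose_graph G') (transpose_graph G)"
  by (cases G; cases G') (auto simp: subgraph_def)

lemma theta_maximal_transpose_graph:
  assumes "theta_maximal \<theta> G"
  shows "theta_maximal \<theta> (transpose_graph G)"
  unfolding theta_maximal_def
proof (intro allI impI)
  fix G' assume "subgraph G' (transpose_graph G)"
  then have "subgraph (transpose_graph G') G"
    using subgraph_transpose_graph by fastforce
  then show "mu_theta \<theta> G' \<le> mu_theta \<theta> (transpose_graph G)"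
    using assms by (metis theta_maximal_def mu_theta_transpose_graph)
qed

lemma theta_maximal_right_degree_ge:
  assumes "wbg (\<mu>, V, W, E)" "density (\<mu>, V, W, E) > 0" "\<theta> > 1"
    and "theta_maximal \<theta> (\<mu>, V, W, E)" "w \<in> W"
  shows "(\<theta> - 1) / \<theta> * density (\<mu>, V, W, E) * mu_set \<mu> V
    \<le> mu_set \<mu> {v \<in> V. (v, w) \<in> E}"
proof -
  have "{v \<in> V. (v, w) \<in> E} = {v \<in> V. (w, v) \<in> prod.swap ` E}"
    by auto
  moreover have "density (\<mu>, W, V, prod.swap ` E) = density (\<mu>, V, W, E)"
    using density_transpose_graph[of "(\<mu>, V, W, E)"] by simp
  ultimately show ?thesis
    using theta_maximal_left_degree_ge[of \<mu> W V "prod.swap ` E" \<theta> w] assms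
      wbg_transpose_graph[of "(\<mu>, V, W, E)"] theta_maximal_transpose_graph[of \<theta> "(\<mu>, V, W, E)"]
    by simp
qed

theorem lemma5p9:
  fixes G :: wbgraph and \<theta> :: real
  assumes "wbg G"
    and "density G > 0"
    and "\<theta> > 1"
    and "theta_maximal \<theta> G"
  shows "eta_connected ((\<theta> - 1) / \<theta> * density G) G"
proof -
  obtain \<mu> V W E where G: "G = (\<mu>, V, W, E)"
    by (cases G) auto
  show ?thesis
    using assms theta_maximal_left_degree_ge[of \<mu> V W E \<theta>]
      theta_maximal_right_degree_ge[of \<mu> V W E \<theta>]
    unfolding G eta_connected_def by auto
qed

end
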